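(* Let $\mathbb{K}$ be a field with algebraic closure $\overline{\mathbb{K}}$, $\nu$ a Krull valuation on $\mathbb{K}[x]$, $\mu$ a valuation on $\overline{\mathbb{K}}[x]$ extending $\nu$, $Q\in\mathbb{K}[x]$ a key polynomial for $\nu$ and $a\in\overline{\mathbb{K}}$ an optimizing root of $Q$. Then $\mu_{x-a}(f)=\nu_Q(f)$ for every $f\in\mathbb{K}[x]$.
   Context: Truncation: for a valuation $\nu$ on $L[x]$ ($L$ a field) and non-constant $q\in L[x]$, every $f$ has a unique $q$-expansion $f=f_0+f_1q+\dots+f_sq^s$ with $\deg f_i<\deg q$; set $\nu_q(f)=\min_i\nu(f_iq^i)$. Thus $\mu_{x-a}(\sum_i c_i(x-a)^i)=\min_i\{\mu(c_i)+i\mu(x-a)\}$ for $c_i\in\overline{\mathbb{K}}$. Key polynomials: for $\nu$ Krull and nonzero $f\in\mathbb{K}[x]$, with Hasse derivatives $\partial_bf=\sum_{i\ge b}\binom{i}{b}a_ix^{i-b}$ for $f=\sum a_ix^i$, set $\epsilon(f)=\max_{1\le b\le\deg f}(\nu(f)-\nu(\partial_bf))/b$ (in the divisible hull of the value group) if $\deg f>0$, and $\epsilon(f)=-\infty$ if $f$ is constant. A monic $Q$ is a key polynomial for $\nu$ if for all $f$, $\epsilon(f)\ge\epsilon(Q)$ implies $\deg f\ge\deg Q$. Optimizing root: for non-constant $f\in\mathbb{K}[x]$, $\delta(f)=\max\{\mu(x-c): c\in\overline{\mathbb{K}}, f(c)=0\}$, and a root $c$ of $f$ with $\mu(x-c)=\delta(f)$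 is an optimizing root. *)

theory Defs
  imports "HOL-Computational_Algebra.Polynomial" "HOL-Algebra.Algebraic_Closure_Type"
begin

text \<open>A Krull valuation on an integral domain R with values in an ordered abelian group:
  the value of 0 is the (implicit) symbol infinity, so the function is only constrained
  on nonzero elements; its values at 0 are irrelevant.\<close>
definition krull_valuation :: "('a::idom \<Rightarrow> 'g::linordered_ab_group_add) \<Rightarrow> bool" where
  "krull_valuation v \<longleftrightarrow>
     (\<forall>a b. a \<noteq> 0 \<longrightarrow> b \<noteq> 0 \<longrightarrow> v (a * b) = v a + v b) \<and>
     (\<forall>a b. a \<noteq> 0 \<longrightarrow> b \<noteq> 0 \<longrightarrow> a + b \<noteq> 0 \<longrightarrow> min (v a) (v b) \<le> v (a + b))"

definition gscale :: "nat \<Rightarrow> 'g::ab_group_add \<Rightarrow> 'g" where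
  "gscale n g = (\<Sum>_<n. g)"

definition hasse_deriv :: "nat \<Rightarrow> 'a::comm_ring_1 poly \<Rightarrow> 'a poly" where
  "hasse_deriv b f = (\<Sum>i\<in>{b..degree f}. monom (of_nat (i choose b) * coeff f i) (i - b))"

text \<open>eps_ge v f g  means  epsilon(f) >= epsilon(g), where
  epsilon(h) = max_{1<=b<=deg h} (v h - v (d_b h))/b  (in the divisible hull; terms with
  d_b h = 0 have value -infinity), and epsilon(h) = -infinity for constant h.
  Since the maxima are over finite sets, max_b A_b/b >= max_c B_c/c iff there is b with
  c*A_b >= b*B_c for all c; this avoids passing to the divisible hull.\<close>
definition eps_ge :: "('a::comm_ring_1 poly \<Rightarrow> 'g::linordered_ab_group_add) \<Rightarrow> 'a poly \<Rightarrow> 'a poly \<Rightarrow> bool" where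
  "eps_ge v f g \<longleftrightarrow>
     (if degree g = 0 then True
      else if degree f = 0 then False
      else (\<exists>b\<in>{1..degree f}. hasse_deriv b f \<noteq> 0 \<and>
              (\<forall>c\<in>{1..degree g}. hasse_deriv c g \<noteq> 0 \<longrightarrow>
                  gscale b (v g - v (hasse_deriv c g)) \<le> gscale c (v f - v (hasse_deriv b f)))))"

definition key_poly :: "('a::field poly \<Rightarrow> 'g::linordered_ab_group_add) \<Rightarrow> 'a poly \<Rightarrow> bool" where
  "key_poly v Q \<longleftrightarrow> lead_coeff Q = 1 \<and> (\<forall>f. f \<noteq> 0 \<longrightarrow> eps_ge v f Q \<longrightarrow> degree Q \<le> degree f)"

definition qexp_coeff :: "'a::field poly \<Rightarrow> 'a poly \<Rightarrow> nat \<Rightarrow> 'a poly" where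
  "qexp_coeff q f i = (f div q ^ i) mod q"

definition trunc_val :: "('a::field poly \<Rightarrow> 'g::linordered_ab_group_add) \<Rightarrow> 'a poly \<Rightarrow> 'a poly \<Rightarrow> 'g" where
  "trunc_val v q f = Min {v (qexp_coeff q f i * q ^ i) | i. i \<le> degree f \<and> qexp_coeff q f i \<noteq> 0}"

definition optimizing_root :: "('a::field alg_closure poly \<Rightarrow> 'g::linordered_ab_group_add)
     \<Rightarrow> 'a poly \<Rightarrow> 'a alg_closure \<Rightarrow> bool" where
  "optimizing_root mu f a \<longleftrightarrow> degree f > 0 \<and> poly (map_poly to_ac f) a = 0 \<and>
     (\<forall>c. poly (map_poly to_ac f) c = 0 \<longrightarrow> mu [:-c, 1:] \<le> mu [:-a, 1:])"

end

theory Submission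
  imports Defs
begin

text \<open>Write \<gamma> = \<mu>(x - a). If every root c of G in Kbar[x] satisfies \<mu>(x - c) \<le> \<gamma>, then
  G(x + a) = \<Sum>j. c_j y^j has min_j (\<mu>(c_j) + j\<gamma>) = \<mu>(G), and the last index attaining
  this minimum is the number of roots with \<mu>(x - c) = \<gamma>: both facts pass through each
  linear factor x - c. The same count controls the Hasse derivatives, \<mu>(\<partial>_b G) \<ge> \<mu>(G) - b\<delta>
  with equality at that index, which relates \<delta>(f) to \<epsilon>(f). As Q is a key polynomial, every f
  with deg f < deg Q has only roots c with \<mu>(x - c) < \<gamma>, since otherwise
  \<epsilon>(f) \<ge> \<delta>(f) \<ge> \<gamma> \<ge> \<epsilon>(Q). So in the Q-expansion f = \<Sum>i. f_i Q^i the term f_i Q^i has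
  value \<nu>(f_i Q^i), attained last at index i m, where m \<ge> 1 is the count for Q. These
  indices are distinct, so among the terms of least value the one with the largest index
  cannot cancel, and \<mu>_(x-a)(f) = min_i \<nu>(f_i Q^i) = \<nu>_Q(f).\<close>

section \<open>Krull valuations\<close>

lemma gscale_0 [simp]: "gscale 0 g = 0"
  by (simp add: gscale_def)

lemma gscale_Suc: "gscale (Suc n) g = g + gscale n g"
  by (simp add: gscale_def add.commute)

lemma gscale_add: "gscale (m + n) g = gscale m g + gscale n g"
  by (induction m) (simp_all add: gscale_Suc gscale_def add.assoc)

lemma gscale_mult: "gscale (m * n) g = gscale m (gscale n g)"
  by (induction m) (simp_all add: gscale_Suc gscale_add)

lemma gscale_mono: "(x::'g::linordered_ab_group_add) \<le> y \<Longrightarrow> gscale n x \<le> gscale n y"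
  by (induction n) (simp_all add: gscale_Suc gscale_def add_mono)

lemma krull_valuation_mult:
  "krull_valuation v \<Longrightarrow> a \<noteq> 0 \<Longrightarrow> b \<noteq> 0 \<Longrightarrow> v (a * b) = v a + v b"
  by (simp add: krull_valuation_def)

lemma krull_valuation_add:
  "krull_valuation v \<Longrightarrow> a \<noteq> 0 \<Longrightarrow> b \<noteq> 0 \<Longrightarrow> a + b \<noteq> 0 \<Longrightarrow> min (v a) (v b) \<le> v (a + b)"
  by (simp add: krull_valuation_def)

lemma krull_valuation_one:
  assumes "krull_valuation v" shows "v 1 = 0"
  using krull_valuation_mult[OF assms, of 1 1] by simp

lemma krull_valuation_uminus:
  assumes "krull_valuation v" shows "v (- a) = v a"
proof (cases "a = 0")
  case False
  have "v (-1) + v (-1) = 0"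
    using krull_valuation_mult[OF assms, of "-1" "-1"] krull_valuation_one[OF assms] by simp
  then have "v (-1) = 0" by simp
  then show ?thesis using krull_valuation_mult[OF assms, of "-1" a] False by simp
qed simp

lemma krull_valuation_power:
  assumes "krull_valuation v" "x \<noteq> 0" shows "v (x ^ n) = gscale n (v x)"
  using assms by (induction n) (simp_all add: krull_valuation_one krull_valuation_mult gscale_Suc)

lemma krull_valuation_const_poly:
  assumes "krull_valuation \<mu>" shows "krull_valuation (\<lambda>x. \<mu> [:x:])"
  unfolding krull_valuation_def
proof (intro conjI allI impI)
  fix a b :: 'a assume "a \<noteq> 0" "b \<noteq> 0"
  then show "\<mu> [:a * b:] = \<mu> [:a:] + \<mu> [:b:]"
    using krull_valuation_mult[OF assms, of "[:a:]" "[:b:]"] by (simp add: mult.commute)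
  assume "a + b \<noteq> 0"
  then show "min (\<mu> [:a:]) (\<mu> [:b:]) \<le> \<mu> [:a + b:]"
    using krull_valuation_add[OF assms, of "[:a:]" "[:b:]"] \<open>a \<noteq> 0\<close> \<open>b \<noteq> 0\<close> by simp
qed

lemma krull_valuation_add_eq_left:
  assumes kv: "krull_valuation v" and "a \<noteq> 0" "b \<noteq> 0" "v a < v b"
  shows "a + b \<noteq> 0 \<and> v (a + b) = v a"
proof
  show ab: "a + b \<noteq> 0"
  proof
    assume "a + b = 0"
    then have "a = - b" by (simp add: eq_neg_iff_add_eq_0)
    then have "v a = v b" using krull_valuation_uminus[OF kv, of b] by simp
    with assms show False by simp
  qed
  have "min (v a) (v b) \<le> v (a + b)" using krull_valuation_add[OF kv] ab assms by blast
  moreover have "min (v (a + b)) (v (- b)) \<le> v a"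
    using krull_valuation_add[OF kv, of "a + b" "- b"] ab assms by simp
  ultimately show "v (a + b) = v a"
    using assms(4) krull_valuation_uminus[OF kv, of b] by (auto simp: min_def split: if_splits)
qed

text \<open>val_ge v x t and val_gt v x t say v x \<ge> t and v x > t, with v 0 read as +\<infinity>.\<close>
definition val_ge :: "('a::zero \<Rightarrow> 'g::linordered_ab_group_add) \<Rightarrow> 'a \<Rightarrow> 'g \<Rightarrow> bool" where
  "val_ge v x t \<longleftrightarrow> x = 0 \<or> t \<le> v x"

definition val_gt :: "('a::zero \<Rightarrow> 'g::linordered_ab_group_add) \<Rightarrow> 'a \<Rightarrow> 'g \<Rightarrow> bool" where
  "val_gt v x t \<longleftrightarrow> x = 0 \<or> t < v x"

lemma val_ge_zero [simp]: "val_ge v 0 t" and val_gt_zero [simp]: "val_gt v 0 t"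
  by (simp_all add: val_ge_def val_gt_def)

lemma val_gt_imp_val_ge: "val_gt v x t \<Longrightarrow> val_ge v x t"
  unfolding val_ge_def val_gt_def by auto

lemma val_ge_mono: "val_ge v x t \<Longrightarrow> s \<le> t \<Longrightarrow> val_ge v x s"
  unfolding val_ge_def by auto

lemma val_ge_imp_val_gt: "val_ge v x t \<Longrightarrow> s < t \<Longrightarrow> val_gt v x s"
  unfolding val_ge_def val_gt_def by auto

lemma val_ge_add:
  assumes "krull_valuation v" "val_ge v x t" "val_ge v y t" shows "val_ge v (x + y) t"
  using assms krull_valuation_add[OF assms(1), of x y] unfolding val_ge_def
  by (cases "x = 0"; cases "y = 0"; cases "x + y = 0") (auto simp: min_def split: if_splits)

lemma val_gt_add:
  assumes "krull_valuation v" "val_gt v x t" "val_gt v y t" shows "val_gt v (x + y) t"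
  using assms krull_valuation_add[OF assms(1), of x y] unfolding val_gt_def
  by (cases "x = 0"; cases "y = 0"; cases "x + y = 0") (auto simp: min_def split: if_splits)

lemma val_ge_sum:
  assumes "krull_valuation v" "\<And>i. i \<in> A \<Longrightarrow> val_ge v (f i) t" shows "val_ge v (sum f A) t"
  using assms(2)
  by (induction A rule: infinite_finite_induct) (simp_all add: val_ge_add[OF assms(1)])

lemma val_gt_sum:
  assumes "krull_valuation v" "\<And>i. i \<in> A \<Longrightarrow> val_gt v (f i) t" shows "val_gt v (sum f A) t"
  using assms(2)
  by (induction A rule: infinite_finite_induct) (simp_all add: val_gt_add[OF assms(1)])

lemma val_ge_mult:
  assumes "krull_valuation v" "val_ge v x s" "val_ge v y t" shows "val_ge v (x * y) (s + t)"
  using assms krull_valuation_mult[OF assms(1), of x y] unfolding val_ge_def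
  by (cases "x = 0"; cases "y = 0") (auto intro: add_mono)

lemma val_gt_mult_left:
  assumes "krull_valuation v" "val_gt v x s" "val_ge v y t" shows "val_gt v (x * y) (s + t)"
  using assms krull_valuation_mult[OF assms(1), of x y] unfolding val_ge_def val_gt_def
  by (cases "x = 0"; cases "y = 0") (auto intro: add_less_le_mono)

lemma val_gt_mult_right:
  assumes "krull_valuation v" "val_ge v x s" "val_gt v y t" shows "val_gt v (x * y) (s + t)"
  using assms krull_valuation_mult[OF assms(1), of x y] unfolding val_ge_def val_gt_def
  by (cases "x = 0"; cases "y = 0") (auto intro: add_le_less_mono)

lemma add_val_gt_eq:
  assumes "krull_valuation v" "x \<noteq> 0" "v x = t" "val_gt v y t"
  shows "x + y \<noteq> 0 \<and> v (x + y) = t"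
  using assms krull_valuation_add_eq_left[OF assms(1,2), of y] unfolding val_gt_def
  by (cases "y = 0") auto

section \<open>Weighted minima of sequences\<close>

text \<open>t = min_j (w (s j) + j\<gamma>) over the nonzero s j, and k is the last index attaining it.
  For s the coefficients of G(x + a) and w = (\<lambda>x. \<mu> [:x:]), t is the truncation \<mu>_(x-a)(G)
  of the valuation with \<mu>(x - a) = \<gamma>.\<close>
definition weighted_min_at ::
    "('a::zero \<Rightarrow> 'g::linordered_ab_group_add) \<Rightarrow> 'g \<Rightarrow> (nat \<Rightarrow> 'a) \<Rightarrow> 'g \<Rightarrow> nat \<Rightarrow> bool" where
  "weighted_min_at w \<gamma> s t k \<longleftrightarrow> s k \<noteq> 0 \<and> w (s k) + gscale k \<gamma> = t \<and>
     (\<forall>j. val_ge w (s j) (t - gscale j \<gamma>)) \<and> (\<forall>j>k. val_gt w (s j) (t - gscale j \<gamma>))"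

lemma weighted_min_atD:
  assumes "weighted_min_at w \<gamma> s t k"
  shows "s k \<noteq> 0" "w (s k) = t - gscale k \<gamma>" "val_ge w (s j) (t - gscale j \<gamma>)"
    "k < j \<Longrightarrow> val_gt w (s j) (t - gscale j \<gamma>)"
  using assms unfolding weighted_min_at_def by (auto simp: eq_diff_eq)

lemma weighted_min_atI:
  assumes "s k \<noteq> 0" "w (s k) = t - gscale k \<gamma>" "\<And>j. val_ge w (s j) (t - gscale j \<gamma>)"
    "\<And>j. k < j \<Longrightarrow> val_gt w (s j) (t - gscale j \<gamma>)"
  shows "weighted_min_at w \<gamma> s t k"
  using assms unfolding weighted_min_at_def by (auto simp: eq_diff_eq)

lemma weighted_min_at_single:
  assumes "s 0 \<noteq> 0" "\<And>j. 0 < j \<Longrightarrow> s j = 0"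
  shows "weighted_min_at w \<gamma> s (w (s 0)) 0"
proof (rule weighted_min_atI)
  show "val_ge w (s j) (w (s 0) - gscale j \<gamma>)" for j
    using assms by (cases j) (auto simp: val_ge_def)
qed (use assms in auto)

text \<open>The coefficient sequence of (y + e) * (\<Sum>j. s j * y ^ j).\<close>
definition linear_factor_seq :: "'a::comm_ring_1 \<Rightarrow> (nat \<Rightarrow> 'a) \<Rightarrow> nat \<Rightarrow> 'a" where
  "linear_factor_seq e s j = e * s j + (case j of 0 \<Rightarrow> 0 | Suc i \<Rightarrow> s i)"

lemma weighted_min_at_linear_factor_lt:
  assumes kv: "krull_valuation w" and min: "weighted_min_at w \<gamma> s t k"
    and "e \<noteq> 0" "w e < \<gamma>"
  shows "weighted_min_at w \<gamma> (linear_factor_seq e s) (w e + t) k"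
proof -
  have shift_gt: "val_gt w (case j of 0 \<Rightarrow> 0 | Suc i \<Rightarrow> s i) (w e + t - gscale j \<gamma>)" for j
  proof (cases j)
    case (Suc i)
    have "w e + t - gscale j \<gamma> < t - gscale i \<gamma>"
      using \<open>w e < \<gamma>\<close> Suc by (simp add: gscale_Suc)
    then show ?thesis using weighted_min_atD(3)[OF min, of i] Suc by (simp add: val_ge_imp_val_gt)
  qed simp
  have e: "val_ge w e (w e)" by (simp add: val_ge_def)
  have ge: "val_ge w (e * s j) (w e + t - gscale j \<gamma>)" for j
    using val_ge_mult[OF kv e weighted_min_atD(3)[OF min, of j]] by (simp add: add_diff_eq)
  have gt: "k < j \<Longrightarrow> val_gt w (e * s j) (w e + t - gscale j \<gamma>)" for j
    using val_gt_mult_right[OF kv e weighted_min_atD(4)[OF min]] by (simp add: add_diff_eq)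
  have "e * s k \<noteq> 0" "w (e * s k) = w e + t - gscale k \<gamma>"
    using krull_valuation_mult[OF kv \<open>e \<noteq> 0\<close> weighted_min_atD(1)[OF min]]
      weighted_min_atD(1,2)[OF min] \<open>e \<noteq> 0\<close> by (simp_all add: add_diff_eq)
  from add_val_gt_eq[OF kv this shift_gt[of k]] show ?thesis
    unfolding linear_factor_seq_def
    by (intro weighted_min_atI) (auto intro: val_ge_add[OF kv] val_gt_add[OF kv] ge gt
        shift_gt val_gt_imp_val_ge)
qed

lemma weighted_min_at_linear_factor_ge:
  assumes kv: "krull_valuation w" and min: "weighted_min_at w \<gamma> s t k"
    and e: "val_ge w e \<gamma>"
  shows "weighted_min_at w \<gamma> (linear_factor_seq e s) (\<gamma> + t) (Suc k)"
proof -
  have shift: "\<gamma> + t - gscale (Suc i) \<gamma> = t - gscale i \<gamma>" for i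
    by (simp add: gscale_Suc)
  have shift_ge: "val_ge w (case j of 0 \<Rightarrow> 0 | Suc i \<Rightarrow> s i) (\<gamma> + t - gscale j \<gamma>)" for j
    using weighted_min_atD(3)[OF min] by (cases j) (simp_all add: shift)
  have shift_gt: "Suc k < j \<Longrightarrow> val_gt w (case j of 0 \<Rightarrow> 0 | Suc i \<Rightarrow> s i) (\<gamma> + t - gscale j \<gamma>)"
    for j using weighted_min_atD(4)[OF min] by (cases j) (simp_all add: shift)
  have ge: "val_ge w (e * s j) (\<gamma> + t - gscale j \<gamma>)" for j
    using val_ge_mult[OF kv e weighted_min_atD(3)[OF min, of j]] by (simp add: add_diff_eq)
  have gt: "k < j \<Longrightarrow> val_gt w (e * s j) (\<gamma> + t - gscale j \<gamma>)" for j
    using val_gt_mult_right[OF kv e weighted_min_atD(4)[OF min]] by (simp add: add_diff_eq)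
  have "val_gt w (e * s (Suc k)) (t - gscale k \<gamma>)"
    using gt[of "Suc k"] by (simp add: shift)
  from add_val_gt_eq[OF kv weighted_min_atD(1,2)[OF min] this]
  have "s k + e * s (Suc k) \<noteq> 0 \<and> w (s k + e * s (Suc k)) = \<gamma> + t - gscale (Suc k) \<gamma>"
    by (simp add: shift)
  moreover have "Suc k < j \<Longrightarrow>
      val_gt w (e * s j + (case j of 0 \<Rightarrow> 0 | Suc i \<Rightarrow> s i)) (\<gamma> + t - gscale j \<gamma>)" for j
    by (intro val_gt_add[OF kv] gt shift_gt) simp_all
  ultimately show ?thesis
    unfolding linear_factor_seq_def
    by (intro weighted_min_atI) (auto simp: add.commute intro: val_ge_add[OF kv] ge shift_ge)
qed

lemma weighted_min_at_linear_factor: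
  assumes kv: "krull_valuation w" and min: "weighted_min_at w \<gamma> s t k" and "\<theta> \<le> \<gamma>"
    and lt: "\<theta> < \<gamma> \<Longrightarrow> e \<noteq> 0 \<and> w e = \<theta>" and eq: "\<theta> = \<gamma> \<Longrightarrow> val_ge w e \<gamma>"
  obtains k' where "weighted_min_at w \<gamma> (linear_factor_seq e s) (\<theta> + t) k'"
    "k' = 0 \<longleftrightarrow> k = 0 \<and> \<theta> < \<gamma>"
proof (cases "\<theta> < \<gamma>")
  case True
  with lt have "e \<noteq> 0" "w e = \<theta>" by simp_all
  with weighted_min_at_linear_factor_lt[OF kv min \<open>e \<noteq> 0\<close>] True
  have "weighted_min_at w \<gamma> (linear_factor_seq e s) (\<theta> + t) k" by simp
  with True show ?thesis by (intro that[of k]) simp_all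
next
  case False
  with \<open>\<theta> \<le> \<gamma>\<close> have "\<theta> = \<gamma>" by simp
  with weighted_min_at_linear_factor_ge[OF kv min eq]
  have "weighted_min_at w \<gamma> (linear_factor_seq e s) (\<theta> + t) (Suc k)" by simp
  with False show ?thesis by (intro that[of "Suc k"]) simp_all
qed

lemma weighted_min_at_mult:
  fixes P R :: "'a::idom poly"
  assumes kv: "krull_valuation w"
    and P: "weighted_min_at w \<gamma> (coeff P) t k" and R: "weighted_min_at w \<gamma> (coeff R) s l"
  shows "weighted_min_at w \<gamma> (coeff (P * R)) (t + s) (k + l)"
proof -
  have bound: "(t - gscale i \<gamma>) + (s - gscale (n - i) \<gamma>) = (t + s) - gscale n \<gamma>" if "i \<le> n" for i n
    using gscale_add[of i "n - i" \<gamma>] that by (simp add: algebra_simps)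
  have term_ge: "val_ge w (coeff P i * coeff R (n - i)) (t + s - gscale n \<gamma>)" if "i \<le> n" for i n
    using val_ge_mult[OF kv weighted_min_atD(3)[OF P, of i] weighted_min_atD(3)[OF R, of "n - i"]]
    unfolding bound[OF that] .
  have term_gt: "val_gt w (coeff P i * coeff R (n - i)) (t + s - gscale n \<gamma>)"
    if "i \<le> n" "k < i \<or> l < n - i" for i n
    using that(2)
      val_gt_mult_left[OF kv weighted_min_atD(4)[OF P, of i] weighted_min_atD(3)[OF R, of "n - i"]]
      val_gt_mult_right[OF kv weighted_min_atD(3)[OF P, of i] weighted_min_atD(4)[OF R, of "n - i"]]
    unfolding bound[OF that(1)] by blast
  have lead_ne: "coeff P k * coeff R l \<noteq> 0"
    using weighted_min_atD(1)[OF P] weighted_min_atD(1)[OF R] by simp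
  have lead_val: "w (coeff P k * coeff R l) = t + s - gscale (k + l) \<gamma>"
    using krull_valuation_mult[OF kv weighted_min_atD(1)[OF P] weighted_min_atD(1)[OF R]]
      weighted_min_atD(2)[OF P] weighted_min_atD(2)[OF R] bound[of k "k + l"] by simp
  have others: "val_gt w (\<Sum>i\<in>{..k + l} - {k}. coeff P i * coeff R (k + l - i))
      (t + s - gscale (k + l) \<gamma>)"
    by (rule val_gt_sum[OF kv]) (auto intro!: term_gt)
  have "coeff (P * R) (k + l) =
      coeff P k * coeff R l + (\<Sum>i\<in>{..k + l} - {k}. coeff P i * coeff R (k + l - i))"
    unfolding coeff_mult by (subst sum.remove[of _ k]) auto
  with add_val_gt_eq[OF kv lead_ne lead_val others]
  have top: "coeff (P * R) (k + l) \<noteq> 0" "w (coeff (P * R) (k + l)) = t + s - gscale (k + l) \<gamma>"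
    by simp_all
  show ?thesis
  proof (rule weighted_min_atI)
    show "val_ge w (coeff (P * R) j) (t + s - gscale j \<gamma>)" for j
      unfolding coeff_mult by (rule val_ge_sum[OF kv]) (simp add: term_ge)
    show "val_gt w (coeff (P * R) j) (t + s - gscale j \<gamma>)" if "k + l < j" for j
      unfolding coeff_mult by (rule val_gt_sum[OF kv]) (use that in \<open>auto intro!: term_gt\<close>)
  qed (use top in simp_all)
qed

lemma weighted_min_at_power:
  fixes P :: "'a::idom poly"
  assumes kv: "krull_valuation w" and P: "weighted_min_at w \<gamma> (coeff P) t k"
  shows "weighted_min_at w \<gamma> (coeff (P ^ n)) (gscale n t) (n * k)"
proof (induction n)
  case 0
  have "weighted_min_at w \<gamma> (coeff 1) (w (coeff 1 0)) 0"
    by (rule weighted_min_at_single) (simp_all add: coeff_1)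
  moreover have "w (coeff 1 0) = 0" using krull_valuation_one[OF kv] by simp
  ultimately show ?case by (metis power_0 gscale_0 mult_0)
next
  case (Suc n)
  show ?case using weighted_min_at_mult[OF kv P Suc] by (simp add: gscale_Suc)
qed

lemma obtain_last_argmin:
  fixes t :: "'i \<Rightarrow> 'a::linorder" and k :: "'i \<Rightarrow> 'b::linorder"
  assumes "finite I" "I \<noteq> {}"
  obtains i0 where "i0 \<in> I" "t i0 = Min (t ` I)" "\<And>i. i \<in> I \<Longrightarrow> t i = Min (t ` I) \<Longrightarrow> k i \<le> k i0"
proof -
  define m where "m = Min (t ` I)"
  define J where "J = {i \<in> I. t i = m}"
  have "m \<in> t ` I" unfolding m_def using assms by simp
  then have "J \<noteq> {}" unfolding J_def by blast
  moreover have "finite J" unfolding J_def using \<open>finite I\<close> by simp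
  ultimately have "Max (k ` J) \<in> k ` J" by simp
  then obtain i0 where i0_max: "Max (k ` J) = k i0" and "i0 \<in> J" by (rule imageE)
  have "k i \<le> k i0" if "i \<in> J" for i
    unfolding i0_max[symmetric] using \<open>finite J\<close> that by simp
  with \<open>i0 \<in> J\<close> show ?thesis unfolding J_def m_def by (intro that[of i0]) simp_all
qed

lemma weighted_min_at_sum:
  assumes kv: "krull_valuation w" and "finite I" "I \<noteq> {}"
    and min: "\<And>i. i \<in> I \<Longrightarrow> weighted_min_at w \<gamma> (s i) (t i) (k i)" and "inj_on k I"
  shows "\<exists>k'. weighted_min_at w \<gamma> (\<lambda>j. \<Sum>i\<in>I. s i j) (Min (t ` I)) k'"
proof -
  obtain i0 where i0: "i0 \<in> I" "t i0 = Min (t ` I)"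
    and i0_last: "\<And>i. i \<in> I \<Longrightarrow> t i = Min (t ` I) \<Longrightarrow> k i \<le> k i0"
    by (rule obtain_last_argmin[OF \<open>finite I\<close> \<open>I \<noteq> {}\<close>, of t k]) blast
  define T where "T = Min (t ` I)"
  note i0 = i0[folded T_def] and i0_last = i0_last[folded T_def]
  have T_le: "T \<le> t i" if "i \<in> I" for i unfolding T_def using \<open>finite I\<close> that by simp
  have ge: "val_ge w (s i j) (T - gscale j \<gamma>)" if "i \<in> I" for i j
    by (rule val_ge_mono[OF weighted_min_atD(3)[OF min[OF that]]]) (simp add: T_le[OF that])
  have gt: "val_gt w (s i j) (T - gscale j \<gamma>)" if i: "i \<in> I" and "T < t i \<or> k i < j" for i j
  proof (cases "T < t i")
    case True
    then show ?thesis by (intro val_ge_imp_val_gt[OF weighted_min_atD(3)[OF min[OF i]]]) simp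
  next
    case False
    then have "t i = T" "k i < j" using T_le[OF i] that(2) by simp_all
    then show ?thesis using weighted_min_atD(4)[OF min[OF i]] by simp
  qed
  have gt_later: "val_gt w (s i j) (T - gscale j \<gamma>)" if "i \<in> I" "k i0 < j" for i j
    using that T_le[OF that(1)] i0_last[OF that(1)]
    by (intro gt) (auto simp: order.order_iff_strict)
  have gt_others: "val_gt w (\<Sum>i\<in>I - {i0}. s i (k i0)) (T - gscale (k i0) \<gamma>)"
  proof (rule val_gt_sum[OF kv])
    fix i assume i: "i \<in> I - {i0}"
    then have "k i \<noteq> k i0" using \<open>inj_on k I\<close> i0(1) by (auto dest: inj_onD)
    then have "T < t i \<or> k i < k i0" using T_le[of i] i0_last[of i] i by force
    then show "val_gt w (s i (k i0)) (T - gscale (k i0) \<gamma>)" using i by (intro gt) simp_all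
  qed
  have "(\<Sum>i\<in>I. s i (k i0)) = s i0 (k i0) + (\<Sum>i\<in>I - {i0}. s i (k i0))"
    using \<open>finite I\<close> i0(1) by (simp add: sum.remove)
  with add_val_gt_eq[OF kv weighted_min_atD(1,2)[OF min[OF i0(1)]] gt_others[folded i0(2)]]
  have top: "(\<Sum>i\<in>I. s i (k i0)) \<noteq> 0" "w (\<Sum>i\<in>I. s i (k i0)) = T - gscale (k i0) \<gamma>"
    using i0(2) by simp_all
  have "weighted_min_at w \<gamma> (\<lambda>j. \<Sum>i\<in>I. s i j) T (k i0)"
  proof (rule weighted_min_atI)
    show "val_ge w (\<Sum>i\<in>I. s i j) (T - gscale j \<gamma>)" for j
      by (rule val_ge_sum[OF kv]) (rule ge)
    show "val_gt w (\<Sum>i\<in>I. s i j) (T - gscale j \<gamma>)" if "k i0 < j" for j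
      by (rule val_gt_sum[OF kv]) (rule gt_later[OF _ that])
  qed (use top in simp_all)
  then show ?thesis unfolding T_def by blast
qed

section \<open>Linear factors: Hasse derivatives and Taylor coefficients\<close>

lemma coeff_hasse_deriv: "coeff (hasse_deriv b f) n = of_nat ((n + b) choose b) * coeff f (n + b)"
proof -
  have "coeff (hasse_deriv b f) n =
     (\<Sum>i\<in>{b..degree f}. if i = n + b then of_nat (i choose b) * coeff f i else 0)"
    unfolding hasse_deriv_def coeff_sum coeff_monom by (intro sum.cong refl) auto
  also have "\<dots> = of_nat ((n + b) choose b) * coeff f (n + b)"
    by (auto simp: coeff_eq_0)
  finally show ?thesis .
qed

lemma hasse_deriv_0 [simp]: "hasse_deriv 0 f = f"
  by (rule poly_eqI) (simp add: coeff_hasse_deriv)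

lemma hasse_deriv_eq_0: "degree f < b \<Longrightarrow> hasse_deriv b f = 0"
  unfolding hasse_deriv_def by simp

lemma map_poly_hasse_deriv:
  "map_poly to_ac (hasse_deriv b f) = hasse_deriv b (map_poly to_ac f)"
  by (rule poly_eqI) (simp add: coeff_hasse_deriv coeff_map_poly)

lemma coeff_linear_factor_mult:
  "coeff ([:e, 1:] * P) = linear_factor_seq e (coeff P)"
  by (rule ext) (simp add: linear_factor_seq_def coeff_pCons split: nat.split)

lemma hasse_deriv_linear_factor_mult:
  fixes c :: "'a::comm_ring_1"
  shows "(\<lambda>b. hasse_deriv b ([:-c, 1:] * G)) = linear_factor_seq [:-c, 1:] (\<lambda>b. hasse_deriv b G)"
proof (intro ext poly_eqI)
  fix b n
  show "coeff (hasse_deriv b ([:-c, 1:] * G)) n =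
      coeff (linear_factor_seq [:-c, 1:] (\<lambda>b. hasse_deriv b G) b) n"
    using coeff_linear_factor_mult[of "-c"]
    by (cases b; cases n)
      (simp_all add: coeff_hasse_deriv linear_factor_seq_def algebra_simps fun_eq_iff
        split: nat.split)
qed

lemma alg_closed_linear_factor_induct [case_names const linear_factor]:
  fixes G :: "'a::alg_closed_field poly"
  assumes const: "\<And>c. P [:c:]" and linear_factor: "\<And>c H. P H \<Longrightarrow> P ([:-c, 1:] * H)"
  shows "P G"
proof (induction "degree G" arbitrary: G rule: less_induct)
  case less
  show ?case
  proof (cases "degree G = 0")
    case True
    then show ?thesis using const by (metis degree_eq_zeroE)
  next
    case False
    then obtain c where "poly G c = 0" using alg_closed_imp_poly_has_root by blast
    then obtain H where G: "G = [:-c, 1:] * H" by (metis dvdE poly_eq_0_iff_dvd)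
    with False have "H \<noteq> 0" by auto
    then have "degree G = Suc (degree H)"
      unfolding G using degree_mult_eq[of "[:-c, 1:]" H] by simp
    then have "degree H < degree G" by simp
    then show ?thesis using less G linear_factor by blast
  qed
qed

lemma hasse_deriv_weighted_min:
  fixes G :: "'a::alg_closed_field poly"
  assumes kv: "krull_valuation \<mu>" and "G \<noteq> 0" and "\<And>c. poly G c = 0 \<Longrightarrow> \<mu> [:-c, 1:] \<le> \<delta>"
  shows "\<exists>m. weighted_min_at \<mu> \<delta> (\<lambda>b. hasse_deriv b G) (\<mu> G) m \<and>
    (m = 0 \<longleftrightarrow> (\<forall>c. poly G c = 0 \<longrightarrow> \<mu> [:-c, 1:] < \<delta>))"
  using assms(2,3)
proof (induction G rule: alg_closed_linear_factor_induct)
  case (const g)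
  then have "weighted_min_at \<mu> \<delta> (\<lambda>b. hasse_deriv b [:g:]) (\<mu> [:g:]) 0"
    using weighted_min_at_single[of "\<lambda>b. hasse_deriv b [:g:]"] by (simp add: hasse_deriv_eq_0)
  with const show ?case by auto
next
  case (linear_factor c H)
  have "[:-c, 1:] \<noteq> 0" "H \<noteq> 0" using linear_factor.prems(1) by auto
  then have val: "\<mu> ([:-c, 1:] * H) = \<mu> [:-c, 1:] + \<mu> H"
    using krull_valuation_mult[OF kv] by blast
  have roots: "poly ([:-c, 1:] * H) d = 0 \<longleftrightarrow> d = c \<or> poly H d = 0" for d by auto
  obtain m where m: "weighted_min_at \<mu> \<delta> (\<lambda>b. hasse_deriv b H) (\<mu> H) m"
    "m = 0 \<longleftrightarrow> (\<forall>d. poly H d = 0 \<longrightarrow> \<mu> [:-d, 1:] < \<delta>)"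
    using linear_factor.IH \<open>H \<noteq> 0\<close> linear_factor.prems(2) roots by blast
  have "\<mu> [:-c, 1:] \<le> \<delta>" using linear_factor.prems(2)[of c] by simp
  moreover have "val_ge \<mu> [:-c, 1:] \<delta>" if "\<mu> [:-c, 1:] = \<delta>"
    using that by (simp add: val_ge_def)
  ultimately obtain k where "weighted_min_at \<mu> \<delta> (linear_factor_seq [:-c, 1:] (\<lambda>b. hasse_deriv b H))
      (\<mu> [:-c, 1:] + \<mu> H) k" "k = 0 \<longleftrightarrow> m = 0 \<and> \<mu> [:-c, 1:] < \<delta>"
    using weighted_min_at_linear_factor[OF kv m(1)] \<open>[:-c, 1:] \<noteq> 0\<close> by blast
  then show ?case using m(2) unfolding hasse_deriv_linear_factor_mult val roots by blast
qed

lemma const_diff_val_eq: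
  assumes kv: "krull_valuation \<mu>" and "\<mu> [:-c, 1:] < \<mu> [:-a, 1:]"
  shows "a - c \<noteq> 0 \<and> \<mu> [:a - c:] = \<mu> [:-c, 1:]"
proof -
  have "[:a - c:] = [:-c, 1:] + - [:-a, 1:]" by simp
  moreover have "\<mu> (- [:-a, 1:]) = \<mu> [:-a, 1:]" by (rule krull_valuation_uminus[OF kv])
  ultimately show ?thesis
    using krull_valuation_add_eq_left[OF kv, of "[:-c, 1:]" "- [:-a, 1:]"] assms(2) by auto
qed

lemma const_diff_val_ge:
  assumes kv: "krull_valuation \<mu>"
  shows "val_ge (\<lambda>x. \<mu> [:x:]) (a - c) (min (\<mu> [:-c, 1:]) (\<mu> [:-a, 1:]))"
proof (cases "a = c")
  case False
  have "[:a - c:] = [:-c, 1:] + - [:-a, 1:]" by simp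
  moreover have "\<mu> (- [:-a, 1:]) = \<mu> [:-a, 1:]" by (rule krull_valuation_uminus[OF kv])
  ultimately show ?thesis
    using krull_valuation_add[OF kv, of "[:-c, 1:]" "- [:-a, 1:]"] False
    unfolding val_ge_def by auto
qed (simp add: val_ge_def)

lemma pcompose_linear_factor_mult:
  fixes a c :: "'a::comm_ring_1"
  shows "pcompose ([:-c, 1:] * H) [:a, 1:] = [:a - c, 1:] * pcompose H [:a, 1:]"
proof -
  have "pcompose [:-c, 1:] [:a, 1:] = [:a - c, 1:]" by (simp add: pcompose_pCons)
  then show ?thesis unfolding pcompose_mult by simp
qed

lemma taylor_weighted_min:
  fixes G :: "'a::alg_closed_field poly"
  assumes kv: "krull_valuation \<mu>" and "G \<noteq> 0" and "\<And>c. poly G c = 0 \<Longrightarrow> \<mu> [:-c, 1:] \<le> \<mu> [:-a, 1:]"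
  shows "\<exists>m. weighted_min_at (\<lambda>x. \<mu> [:x:]) (\<mu> [:-a, 1:]) (coeff (pcompose G [:a, 1:])) (\<mu> G) m \<and>
    (m = 0 \<longleftrightarrow> (\<forall>c. poly G c = 0 \<longrightarrow> \<mu> [:-c, 1:] < \<mu> [:-a, 1:]))"
  using assms(2,3)
proof (induction G rule: alg_closed_linear_factor_induct)
  case (const g)
  have "weighted_min_at (\<lambda>x. \<mu> [:x:]) (\<mu> [:-a, 1:]) (coeff [:g:]) (\<mu> [:coeff [:g:] 0:]) 0"
    by (rule weighted_min_at_single) (use const in \<open>simp_all add: coeff_pCons split: nat.split\<close>)
  with const show ?case by auto
next
  case (linear_factor c H)
  have "[:-c, 1:] \<noteq> 0" "H \<noteq> 0" using linear_factor.prems(1) by auto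
  then have val: "\<mu> ([:-c, 1:] * H) = \<mu> [:-c, 1:] + \<mu> H"
    using krull_valuation_mult[OF kv] by blast
  have roots: "poly ([:-c, 1:] * H) d = 0 \<longleftrightarrow> d = c \<or> poly H d = 0" for d by auto
  obtain m where m:
    "weighted_min_at (\<lambda>x. \<mu> [:x:]) (\<mu> [:-a, 1:]) (coeff (pcompose H [:a, 1:])) (\<mu> H) m"
    "m = 0 \<longleftrightarrow> (\<forall>d. poly H d = 0 \<longrightarrow> \<mu> [:-d, 1:] < \<mu> [:-a, 1:])"
    using linear_factor.IH \<open>H \<noteq> 0\<close> linear_factor.prems(2) roots by blast
  have "\<mu> [:-c, 1:] \<le> \<mu> [:-a, 1:]" using linear_factor.prems(2)[of c] by simp
  then obtain k where "weighted_min_at (\<lambda>x. \<mu> [:x:]) (\<mu> [:-a, 1:])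
      (linear_factor_seq (a - c) (coeff (pcompose H [:a, 1:]))) (\<mu> [:-c, 1:] + \<mu> H) k"
    "k = 0 \<longleftrightarrow> m = 0 \<and> \<mu> [:-c, 1:] < \<mu> [:-a, 1:]"
    by (rule weighted_min_at_linear_factor[OF krull_valuation_const_poly[OF kv] m(1)])
      (use const_diff_val_eq[OF kv] const_diff_val_ge[OF kv, of a c] in auto)
  then show ?case
    using m(2) unfolding pcompose_linear_factor_mult coeff_linear_factor_mult val roots by blast
qed

section \<open>Truncations\<close>

lemma qexp_coeff_linear:
  fixes a :: "'a::field"
  shows "qexp_coeff [:-a, 1:] F i = [:coeff (pcompose F [:a, 1:]) i:]"
proof (induction i arbitrary: F)
  case 0
  have F: "F = [:poly F a:] + synthetic_div F a * [:-a, 1:]"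
    using synthetic_div_correct'[of a F] by (simp add: algebra_simps)
  have "F mod [:-a, 1:] = [:poly F a:]"
    by (subst F, subst mod_mult_self1) (rule mod_poly_less, simp)
  then show ?case by (simp add: qexp_coeff_def pcompose_coeff_0)
next
  case (Suc i)
  define s where "s = synthetic_div F a"
  have F: "F = [:poly F a:] + s * [:-a, 1:]"
    using synthetic_div_correct'[of a F] by (simp add: s_def algebra_simps)
  have "F div [:-a, 1:] = s"
    by (subst F, subst div_mult_self1) (simp_all add: div_poly_less)
  then have "qexp_coeff [:-a, 1:] F (Suc i) = qexp_coeff [:-a, 1:] s i"
    unfolding qexp_coeff_def power_Suc poly_div_mult_right by simp
  moreover have "pcompose [:-a, 1:] [:a, 1:] = [:0, 1:]" by (simp add: pcompose_pCons)
  then have "pcompose F [:a, 1:] = [:poly F a:] + pcompose s [:a, 1:] * [:0, 1:]"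
    by (subst F) (simp only: pcompose_add pcompose_mult pcompose_const)
  then have "coeff (pcompose F [:a, 1:]) (Suc i) = coeff (pcompose s [:a, 1:]) i"
    by (simp add: coeff_pCons)
  ultimately show ?case using Suc.IH[of s] by simp
qed

lemma qexp_expansion_partial:
  fixes q f :: "'a::field poly"
  shows "f = (\<Sum>i<N. qexp_coeff q f i * q ^ i) + q ^ N * (f div q ^ N)"
proof (induction N)
  case (Suc N)
  define g where "g = f div q ^ N"
  have "f div q ^ Suc N = g div q"
    unfolding g_def by (simp only: power_Suc2 poly_div_mult_right)
  have "q ^ N * g = q ^ N * (g mod q + q * (g div q))" by simp
  also have "\<dots> = qexp_coeff q f N * q ^ N + q ^ Suc N * (f div q ^ Suc N)"
    unfolding qexp_coeff_def g_def[symmetric] \<open>f div q ^ Suc N = g div q\<close>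
    by (simp only: distrib_left power_Suc2 ac_simps)
  finally show ?case using Suc.IH unfolding g_def by (simp add: add.assoc)
qed simp

lemma qexp_expansion:
  fixes q f :: "'a::field poly"
  assumes "0 < degree q"
  shows "f = (\<Sum>i\<le>degree f. qexp_coeff q f i * q ^ i)"
proof -
  have "degree f \<le> degree f * degree q" using assms by simp
  moreover have "Suc (degree f) * degree q = degree q + degree f * degree q" by simp
  ultimately have "degree f < Suc (degree f) * degree q" using assms by linarith
  also have "\<dots> = degree (q ^ Suc (degree f))"
    by (rule degree_power_eq[symmetric]) (use assms in auto)
  finally have "f div q ^ Suc (degree f) = 0" by (rule div_poly_less)
  then show ?thesis using qexp_expansion_partial[of f q "Suc (degree f)"]
    by (simp add: lessThan_Suc_atMost)
qed

lemma trunc_val_linear: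
  fixes \<mu> :: "'a::field poly \<Rightarrow> 'g::linordered_ab_group_add"
  assumes kv: "krull_valuation \<mu>"
    and min: "weighted_min_at (\<lambda>x. \<mu> [:x:]) (\<mu> [:-a, 1:]) (coeff (pcompose F [:a, 1:])) t k"
  shows "trunc_val \<mu> [:-a, 1:] F = t"
proof -
  define P where "P = pcompose F [:a, 1:]"
  have term_val: "\<mu> (qexp_coeff [:-a, 1:] F i * [:-a, 1:] ^ i) =
      \<mu> [:coeff P i:] + gscale i (\<mu> [:-a, 1:])"
    if "coeff P i \<noteq> 0" for i
    using krull_valuation_mult[OF kv, of "[:coeff P i:]" "[:-a, 1:] ^ i"]
      krull_valuation_power[OF kv, of "[:-a, 1:]" i] that
    by (simp add: qexp_coeff_linear P_def)
  have degree_P: "degree P = degree F" by (simp add: P_def degree_pcompose)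
  have nonzero_iff: "qexp_coeff [:-a, 1:] F i \<noteq> 0 \<longleftrightarrow> coeff P i \<noteq> 0" for i
    by (simp add: qexp_coeff_linear P_def)
  have "trunc_val \<mu> [:-a, 1:] F =
      Min ((\<lambda>i. \<mu> (qexp_coeff [:-a, 1:] F i * [:-a, 1:] ^ i)) `
        {i. i \<le> degree F \<and> qexp_coeff [:-a, 1:] F i \<noteq> 0})"
    unfolding trunc_val_def by (rule arg_cong[where f = Min]) blast
  also have "\<dots> = Min ((\<lambda>i. \<mu> [:coeff P i:] + gscale i (\<mu> [:-a, 1:])) `
      {i. i \<le> degree F \<and> coeff P i \<noteq> 0})"
    by (intro arg_cong[where f = Min] image_cong) (simp_all add: nonzero_iff term_val)
  also have "\<dots> = t"
  proof (rule Min_eqI)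
    show "t \<in> (\<lambda>i. \<mu> [:coeff P i:] + gscale i (\<mu> [:-a, 1:])) ` {i. i \<le> degree F \<and> coeff P i \<noteq> 0}"
      using weighted_min_atD(1,2)[OF min] le_degree[of P k] degree_P unfolding P_def by force
  qed (use weighted_min_atD(3)[OF min] in \<open>auto simp: P_def val_ge_def diff_le_eq\<close>)
  finally show ?thesis .
qed

section \<open>Key polynomials and optimizing roots\<close>

lemma map_poly_to_ac_add: "map_poly to_ac (p + q) = map_poly to_ac p + map_poly to_ac q"
  by (rule poly_eqI) (simp add: coeff_map_poly)

lemma map_poly_to_ac_mult: "map_poly to_ac (p * q) = map_poly to_ac p * map_poly to_ac q"
  by (rule poly_eqI) (simp add: coeff_map_poly coeff_mult to_ac_sum)

lemma map_poly_to_ac_power: "map_poly to_ac (p ^ n) = map_poly to_ac p ^ n"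
  by (induction n) (simp_all add: map_poly_to_ac_mult)

lemma map_poly_to_ac_sum: "map_poly to_ac (sum f A) = (\<Sum>i\<in>A. map_poly to_ac (f i))"
  by (induction A rule: infinite_finite_induct) (simp_all add: map_poly_to_ac_add)

lemma map_poly_to_ac_eq_0_iff [simp]: "map_poly to_ac p = 0 \<longleftrightarrow> p = 0"
  by (rule map_poly_eq_0_iff) auto

lemma obtain_root_maximizing:
  fixes G :: "'a::idom poly" and \<phi> :: "'a \<Rightarrow> 'b::linorder"
  assumes "G \<noteq> 0" "poly G c = 0"
  obtains c' where "poly G c' = 0" "\<And>d. poly G d = 0 \<Longrightarrow> \<phi> d \<le> \<phi> c'"
proof -
  define R where "R = {d. poly G d = 0}"
  have "finite R" "c \<in> R" unfolding R_def using poly_roots_finite[OF assms(1)] assms(2) by auto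
  then have "Max (\<phi> ` R) \<in> \<phi> ` R" by (intro Max_in) auto
  then obtain c' where max: "Max (\<phi> ` R) = \<phi> c'" and "c' \<in> R" by (rule imageE)
  have "\<phi> d \<le> \<phi> c'" if "poly G d = 0" for d
    unfolding max[symmetric] using \<open>finite R\<close> that by (simp add: R_def)
  with \<open>c' \<in> R\<close> show ?thesis by (intro that) (auto simp: R_def)
qed

text \<open>The slope \<delta> sits between the two \<epsilon>-values: \<epsilon>(f) \<ge> \<delta> \<ge> \<epsilon>(g).\<close>
lemma eps_geI:
  fixes v :: "'a::comm_ring_1 poly \<Rightarrow> 'g::linordered_ab_group_add"
  assumes "0 < degree g" and b: "b \<in> {1..degree f}" "hasse_deriv b f \<noteq> 0"
    and f_slope: "v f - v (hasse_deriv b f) = gscale b \<delta>"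
    and g_slopes: "\<And>c. c \<in> {1..degree g} \<Longrightarrow> hasse_deriv c g \<noteq> 0 \<Longrightarrow>
      v g - v (hasse_deriv c g) \<le> gscale c \<delta>"
  shows "eps_ge v f g"
proof -
  have "gscale b (v g - v (hasse_deriv c g)) \<le> gscale c (v f - v (hasse_deriv b f))"
    if "c \<in> {1..degree g}" "hasse_deriv c g \<noteq> 0" for c
  proof -
    have "gscale b (v g - v (hasse_deriv c g)) \<le> gscale b (gscale c \<delta>)"
      by (rule gscale_mono[OF g_slopes[OF that]])
    also have "\<dots> = gscale c (gscale b \<delta>)" by (metis gscale_mult mult.commute)
    finally show ?thesis unfolding f_slope .
  qed
  with assms show ?thesis unfolding eps_ge_def by auto
qed

locale key_poly_optimizing_root =
  fixes \<nu> :: "'k::field poly \<Rightarrow> 'g::linordered_ab_group_add"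
    and \<mu> :: "'k alg_closure poly \<Rightarrow> 'g"
    and Q :: "'k poly" and a :: "'k alg_closure"
  assumes krull_\<nu>: "krull_valuation \<nu>" and krull_\<mu>: "krull_valuation \<mu>"
    and extends: "\<And>f. f \<noteq> 0 \<Longrightarrow> \<mu> (map_poly to_ac f) = \<nu> f"
    and key: "key_poly \<nu> Q" and optimizing: "optimizing_root \<mu> Q a"
begin

lemma degree_Q_pos: "0 < degree Q"
  using optimizing unfolding optimizing_root_def by simp

lemma Q_nonzero: "Q \<noteq> 0"
  using degree_Q_pos by auto

lemma roots_Q_le: "poly (map_poly to_ac Q) c = 0 \<Longrightarrow> \<mu> [:-c, 1:] \<le> \<mu> [:-a, 1:]"
  using optimizing unfolding optimizing_root_def by blast

lemma hasse_deriv_extends: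
  "hasse_deriv b f \<noteq> 0 \<Longrightarrow> \<nu> (hasse_deriv b f) = \<mu> (hasse_deriv b (map_poly to_ac f))"
  using extends[of "hasse_deriv b f"] by (simp add: map_poly_hasse_deriv)

lemma slope_Q_le:
  assumes "hasse_deriv c Q \<noteq> 0"
  shows "\<nu> Q - \<nu> (hasse_deriv c Q) \<le> gscale c (\<mu> [:-a, 1:])"
proof -
  obtain m where "weighted_min_at \<mu> (\<mu> [:-a, 1:]) (\<lambda>b. hasse_deriv b (map_poly to_ac Q))
      (\<mu> (map_poly to_ac Q)) m"
    using hasse_deriv_weighted_min[OF krull_\<mu>, of "map_poly to_ac Q" "\<mu> [:-a, 1:]"]
      Q_nonzero roots_Q_le by auto
  from weighted_min_atD(3)[OF this, of c] assms show ?thesis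
    using hasse_deriv_extends[OF assms] extends[OF Q_nonzero]
    by (simp add: val_ge_def algebra_simps flip: map_poly_hasse_deriv)
qed

text \<open>Otherwise \<epsilon>(f) \<ge> \<delta>(f) \<ge> \<mu>(x - a) \<ge> \<epsilon>(Q), against the key property of Q.\<close>
lemma roots_below_optimizing:
  assumes "f \<noteq> 0" "degree f < degree Q" and root: "poly (map_poly to_ac f) c = 0"
  shows "\<mu> [:-c, 1:] < \<mu> [:-a, 1:]"
proof (rule ccontr)
  assume not_below: "\<not> ?thesis"
  obtain c' where root': "poly (map_poly to_ac f) c' = 0"
    and max: "\<And>d. poly (map_poly to_ac f) d = 0 \<Longrightarrow> \<mu> [:-d, 1:] \<le> \<mu> [:-c', 1:]"
    using obtain_root_maximizing[of "map_poly to_ac f" c "\<lambda>d. \<mu> [:-d, 1:]"] \<open>f \<noteq> 0\<close> root by auto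
  define \<delta> where "\<delta> = \<mu> [:-c', 1:]"
  have a_le: "\<mu> [:-a, 1:] \<le> \<delta>" using not_below max[OF root] by (simp add: \<delta>_def)
  obtain m where
    m: "weighted_min_at \<mu> \<delta> (\<lambda>b. hasse_deriv b (map_poly to_ac f)) (\<mu> (map_poly to_ac f)) m"
    "m = 0 \<longleftrightarrow> (\<forall>d. poly (map_poly to_ac f) d = 0 \<longrightarrow> \<mu> [:-d, 1:] < \<delta>)"
    using hasse_deriv_weighted_min[OF krull_\<mu>, of "map_poly to_ac f" \<delta>] \<open>f \<noteq> 0\<close> max
    unfolding \<delta>_def by auto
  have "m \<noteq> 0" using m(2) root' by (auto simp: \<delta>_def)
  have "hasse_deriv m f \<noteq> 0"
    using weighted_min_atD(1)[OF m(1)] by (auto simp flip: map_poly_hasse_deriv)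
  then have "m \<le> degree f" using hasse_deriv_eq_0 not_le by blast
  have "eps_ge \<nu> f Q"
  proof (rule eps_geI[OF degree_Q_pos _ \<open>hasse_deriv m f \<noteq> 0\<close>])
    show "m \<in> {1..degree f}" using \<open>m \<noteq> 0\<close> \<open>m \<le> degree f\<close> by simp
    show "\<nu> f - \<nu> (hasse_deriv m f) = gscale m \<delta>"
      using weighted_min_atD(2)[OF m(1)] hasse_deriv_extends[OF \<open>hasse_deriv m f \<noteq> 0\<close>]
        extends[OF \<open>f \<noteq> 0\<close>] by (simp add: algebra_simps)
    show "\<nu> Q - \<nu> (hasse_deriv c Q) \<le> gscale c \<delta>" if "hasse_deriv c Q \<noteq> 0" for c
      using slope_Q_le[OF that] gscale_mono[OF a_le, of c] by simp
  qed
  then have "degree Q \<le> degree f" using key \<open>f \<noteq> 0\<close> unfolding key_poly_def by blast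
  with \<open>degree f < degree Q\<close> show False by simp
qed

lemma taylor_weighted_min_Q:
  obtains m where "0 < m"
    "weighted_min_at (\<lambda>x. \<mu> [:x:]) (\<mu> [:-a, 1:])
      (coeff (pcompose (map_poly to_ac Q) [:a, 1:])) (\<nu> Q) m"
proof -
  obtain m where m: "weighted_min_at (\<lambda>x. \<mu> [:x:]) (\<mu> [:-a, 1:])
      (coeff (pcompose (map_poly to_ac Q) [:a, 1:])) (\<mu> (map_poly to_ac Q)) m"
    "m = 0 \<longleftrightarrow> (\<forall>c. poly (map_poly to_ac Q) c = 0 \<longrightarrow> \<mu> [:-c, 1:] < \<mu> [:-a, 1:])"
    using taylor_weighted_min[OF krull_\<mu>, of "map_poly to_ac Q" a] Q_nonzero roots_Q_le by auto
  have "poly (map_poly to_ac Q) a = 0" using optimizing unfolding optimizing_root_def by simp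
  with m(2) have "0 < m" by auto
  with m(1) show ?thesis using extends[OF Q_nonzero] by (intro that) simp_all
qed

lemma taylor_weighted_min_qexp_term:
  assumes Q_min: "weighted_min_at (\<lambda>x. \<mu> [:x:]) (\<mu> [:-a, 1:])
      (coeff (pcompose (map_poly to_ac Q) [:a, 1:])) (\<nu> Q) m"
    and "g \<noteq> 0" "degree g < degree Q"
  shows "weighted_min_at (\<lambda>x. \<mu> [:x:]) (\<mu> [:-a, 1:])
    (coeff (pcompose (map_poly to_ac (g * Q ^ i)) [:a, 1:])) (\<nu> (g * Q ^ i)) (i * m)"
proof -
  have kw: "krull_valuation (\<lambda>x. \<mu> [:x:])" by (rule krull_valuation_const_poly[OF krull_\<mu>])
  have "\<forall>c. poly (map_poly to_ac g) c = 0 \<longrightarrow> \<mu> [:-c, 1:] < \<mu> [:-a, 1:]"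
    using roots_below_optimizing[OF assms(2,3)] by blast
  then obtain k where k: "weighted_min_at (\<lambda>x. \<mu> [:x:]) (\<mu> [:-a, 1:])
      (coeff (pcompose (map_poly to_ac g) [:a, 1:])) (\<nu> g) k" "k = 0"
    using taylor_weighted_min[OF krull_\<mu>, of "map_poly to_ac g" a] extends[OF \<open>g \<noteq> 0\<close>] \<open>g \<noteq> 0\<close>
    by (fastforce intro: less_imp_le)
  have "pcompose (map_poly to_ac (g * Q ^ i)) [:a, 1:] =
      pcompose (map_poly to_ac g) [:a, 1:] * pcompose (map_poly to_ac Q) [:a, 1:] ^ i"
    by (induction i) (simp_all add: map_poly_to_ac_mult map_poly_to_ac_power pcompose_mult ac_simps)
  moreover have "\<nu> (g * Q ^ i) = \<nu> g + gscale i (\<nu> Q)"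
    using krull_valuation_mult[OF krull_\<nu> \<open>g \<noteq> 0\<close>, of "Q ^ i"]
      krull_valuation_power[OF krull_\<nu> Q_nonzero] Q_nonzero by simp
  ultimately show ?thesis
    using weighted_min_at_mult[OF kw k(1) weighted_min_at_power[OF kw Q_min]] k(2) by simp
qed

lemma trunc_val_map_eq:
  assumes "f \<noteq> 0"
  shows "trunc_val \<mu> [:-a, 1:] (map_poly to_ac f) = trunc_val \<nu> Q f"
proof -
  define I where "I = {i. i \<le> degree f \<and> qexp_coeff Q f i \<noteq> 0}"
  define T where "T i = qexp_coeff Q f i * Q ^ i" for i
  have "finite I" unfolding I_def by simp
  have "(\<Sum>i\<le>degree f. T i) = (\<Sum>i\<in>I. T i)"
    by (rule sum.mono_neutral_right) (auto simp: I_def T_def)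
  then have expansion: "f = (\<Sum>i\<in>I. T i)"
    using qexp_expansion[OF degree_Q_pos, of f] unfolding T_def by simp
  with \<open>f \<noteq> 0\<close> have "I \<noteq> {}" by auto
  obtain m where "0 < m" and Q_min: "weighted_min_at (\<lambda>x. \<mu> [:x:]) (\<mu> [:-a, 1:])
      (coeff (pcompose (map_poly to_ac Q) [:a, 1:])) (\<nu> Q) m"
    by (rule taylor_weighted_min_Q)
  have terms: "weighted_min_at (\<lambda>x. \<mu> [:x:]) (\<mu> [:-a, 1:])
      (coeff (pcompose (map_poly to_ac (T i)) [:a, 1:])) (\<nu> (T i)) (i * m)" if "i \<in> I" for i
    using that degree_mod_less'[OF Q_nonzero] unfolding T_def I_def qexp_coeff_def
    by (intro taylor_weighted_min_qexp_term[OF Q_min]) auto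
  have "inj_on (\<lambda>i. i * m) I" using \<open>0 < m\<close> by (auto intro: inj_onI)
  from weighted_min_at_sum[OF krull_valuation_const_poly[OF krull_\<mu>] \<open>finite I\<close> \<open>I \<noteq> {}\<close>
      terms this]
  obtain k where "weighted_min_at (\<lambda>x. \<mu> [:x:]) (\<mu> [:-a, 1:])
      (\<lambda>j. \<Sum>i\<in>I. coeff (pcompose (map_poly to_ac (T i)) [:a, 1:]) j) (Min ((\<lambda>i. \<nu> (T i)) ` I)) k"
    by blast
  moreover have "coeff (pcompose (map_poly to_ac f) [:a, 1:]) =
      (\<lambda>j. \<Sum>i\<in>I. coeff (pcompose (map_poly to_ac (T i)) [:a, 1:]) j)"
    by (subst expansion) (simp add: map_poly_to_ac_sum pcompose_sum coeff_sum fun_eq_iff)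
  ultimately have "trunc_val \<mu> [:-a, 1:] (map_poly to_ac f) = Min ((\<lambda>i. \<nu> (T i)) ` I)"
    using trunc_val_linear[OF krull_\<mu>] by metis
  also have "\<dots> = trunc_val \<nu> Q f"
    unfolding trunc_val_def T_def I_def by (rule arg_cong[where f = Min]) blast
  finally show ?thesis .
qed

end

theorem theorem3p1:
  fixes \<nu> :: "'k::field poly \<Rightarrow> 'g::linordered_ab_group_add"
    and \<mu> :: "'k alg_closure poly \<Rightarrow> 'g"
    and Q :: "'k poly" and a :: "'k alg_closure"
  assumes "krull_valuation \<nu>"
    and "krull_valuation \<mu>"
    and "\<forall>f. f \<noteq> 0 \<longrightarrow> \<mu> (map_poly to_ac f) = \<nu> f"
    and "key_poly \<nu> Q"
    and "optimizing_root \<mu> Q a"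
  shows "\<forall>f. f \<noteq> 0 \<longrightarrow> trunc_val \<mu> [:-a, 1:] (map_poly to_ac f) = trunc_val \<nu> Q f"
proof -
  interpret key_poly_optimizing_root \<nu> \<mu> Q a
    using assms by unfold_locales blast+
  show ?thesis using trunc_val_map_eq by blast
qed

end
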